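(* For every $n\in\mathbb N$ the Hall–Littlewood–Schubert series satisfies, as an identity of rational functions in $\mathbb{Q}(Y,\mathbf X)$, \[ \mathsf{HLS}_n(Y^{-1},\mathbf X^{-1})=(-1)^n\,Y^{-\binom{n}{2}}\,X_{[n]}\cdot \mathsf{HLS}_n(Y,\mathbf X), \] where $\mathbf X^{-1}=(X_C^{-1})_{\varnothing\neq C\subseteq[n]}$.
   Context: Let $n\in\mathbb N$ and $[n]=\{1,\dots,n\}$. $\mathrm{SSYT}_n$ denotes the set of semistandard Young tableaux with entries in $[n]$ (a Young diagram of a partition filled with entries weakly increasing along rows and strictly increasing down columns), including the empty tableau. $T_{ij}$ denotes the entry of $T$ in row $i$, column $j$. A tableau is identified with the sequence $(C_1,\dots,C_\ell)$ of its columns, where $C_j\subseteq[n]$ is the set of entries of column $j$; "$C\in T$" means $C$ is one of the columns of $T$ (products over $C\in T$ are taken over columns, with multiplicity). $T$ is reduced if its columns are pairwise distinct; $\mathrm{rSSYT}_n$ is the (finite) set of reduced tableaux. For $T=(C_1,\dots,C_\ell)$ and $i,j\in\mathbb N$ such that the cells $(i,j)$ and $(i,j+1)$ both exist, the leg set is $\mathrm{Leg}^+_T(i,j)=C_j\cap\{T_{ij},T_{ij}+1,\dots,T_{i,j+1}\}$ if $T_{i,j+1}\notin C_j$, and $\varnothing$ otherwise (and $\varnothing$ if one of the two cells does not exist). The leg polynomial is $\Phi_T(Y)=\prod_{(i,j):\,\mathrm{Leg}^+_T(i,j)\neq\varnothing}\bigl(1-Y^{\#\mathrm{Leg}^+_T(i,j)}\bigr)\in\mathbb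 Z[Y]$. With independent variables $Y$ and $\mathbf X=(X_C)_{\varnothing\neq C\subseteq[n]}$, the Hall–Littlewood–Schubert series is \[\mathsf{HLS}_n(Y,\mathbf X)=\sum_{T\in\mathrm{rSSYT}_n}\Phi_T(Y)\prod_{C\in T}\frac{X_C}{1-X_C}\in\mathbb Z[Y](\mathbf X).\] *)

theory Defs
  imports Main
begin

text \<open>A tableau is the list of its columns (C_1,...,C_l), each column a finite set of
entries. Rows and columns are 0-indexed here: entry T i j is the (i+1)-th smallest
element of column j, i.e. the paper's T_{i+1,j+1}.\<close>

definition entry :: "nat set list \<Rightarrow> nat \<Rightarrow> nat \<Rightarrow> nat" where
  "entry T i j = sorted_list_of_set (T ! j) ! i"

definition cell_exists :: "nat set list \<Rightarrow> nat \<Rightarrow> nat \<Rightarrow> bool" where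
  "cell_exists T i j \<longleftrightarrow> j < length T \<and> i < card (T ! j)"

definition is_ssyt :: "nat \<Rightarrow> nat set list \<Rightarrow> bool" where
  "is_ssyt n T \<longleftrightarrow>
     (\<forall>C\<in>set T. C \<noteq> {} \<and> C \<subseteq> {1..n}) \<and>
     (\<forall>j. Suc j < length T \<longrightarrow>
        card (T ! Suc j) \<le> card (T ! j) \<and>
        (\<forall>i < card (T ! Suc j). entry T i j \<le> entry T i (Suc j)))"

definition rSSYT :: "nat \<Rightarrow> nat set list set" where
  "rSSYT n = {T. is_ssyt n T \<and> distinct T}"

definition leg :: "nat set list \<Rightarrow> nat \<Rightarrow> nat \<Rightarrow> nat set" where
  "leg T i j =
     (if cell_exists T i j \<and> cell_exists T i (Suc j) \<and> entry T i (Suc j) \<notin> T ! j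
      then T ! j \<inter> {entry T i j .. entry T i (Suc j)} else {})"

definition leg_poly :: "nat set list \<Rightarrow> 'a::comm_ring_1 \<Rightarrow> 'a" where
  "leg_poly T y = (\<Prod>(i,j)\<in>{(i,j). cell_exists T i j \<and> leg T i j \<noteq> {}}.
                     1 - y ^ card (leg T i j))"

text \<open>Evaluation of HLS_n(Y,X) at Y = y, X_C = x C.\<close>

definition HLS :: "nat \<Rightarrow> 'a::field \<Rightarrow> (nat set \<Rightarrow> 'a) \<Rightarrow> 'a" where
  "HLS n y x = (\<Sum>T\<in>rSSYT n. leg_poly T y * prod_list (map (\<lambda>C. x C / (1 - x C)) T))"

end

theory Submission
  imports Defs
begin

(*
  A reduced tableau is a chain C_1 < ... < C_l of distinct nonempty columns for the order
  col_le, and its leg polynomial factors over consecutive pairs of columns.  Hence, with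
  t = X / (1 - X) and the transfer matrix A_y(C, D) = Phi_[C,D](y), the series equals
  (1 + t [n]) K([n]) where K is the unique solution of the triangular recursion
  K(C) = 1 + sum_{D > C} A_y(C, D) t(D) K(D).

  On all subsets of [n] (with the empty column on top) the matrices satisfy the inversion
  formula A_{1/y} S A_y = S, where S(E) = (-1)^|E| y^defect(E) is diagonal.  Summing over E
  one element k at a time turns the left-hand side into an explicit product of local
  factors, one of which vanishes at the first k where C and D differ.  Since inverting X
  replaces t by -1 - t, the inversion formula shows that -S K / y^(n choose 2) solves the
  recursion for (1/y, 1/X); by uniqueness it is the chain sum there, and evaluating at [n]
  gives the functional equation.
*)

section \<open>Finite sums and triangular recursions\<close>

lemma sum_Pow_insert:
  assumes "finite A" "a \<notin> A"
  shows "(\<Sum>X\<in>Pow (insert a A). f X) = (\<Sum>X\<in>Pow A. f X + f (insert a X))"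
proof -
  have "inj_on (insert a) (Pow A)" using assms(2) by (intro inj_onI) (meson PowD insert_ident subsetD)
  then have "(\<Sum>X\<in>insert a ` Pow A. f X) = (\<Sum>X\<in>Pow A. f (insert a X))"
    by (simp add: sum.reindex)
  moreover have "(\<Sum>X\<in>Pow (insert a A). f X) = (\<Sum>X\<in>Pow A. f X) + (\<Sum>X\<in>insert a ` Pow A. f X)"
    unfolding Pow_insert using assms by (intro sum.union_disjoint) auto
  ultimately show ?thesis by (simp add: sum.distrib)
qed

lemma sum_lists_by_head:
  assumes "finite R" "finite N" "\<And>C L. C # L \<in> R \<Longrightarrow> C \<in> N"
  shows "(\<Sum>T\<in>R. g T) = (if [] \<in> R then g [] else 0) + (\<Sum>C\<in>N. \<Sum>L\<in>Cons C -` R. g (C # L))"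
proof -
  have fin: "finite (Cons C -` R)" for C using assms(1) by (rule finite_vimageI) simp
  have "T \<in> (\<lambda>(C, L). C # L) ` Sigma N (\<lambda>C. Cons C -` R)" if "T \<in> R - {[]}" for T
    using that assms(3) by (cases T) force+
  then have bij: "bij_betw (\<lambda>(C, L). C # L) (Sigma N (\<lambda>C. Cons C -` R)) (R - {[]})"
    by (intro bij_betw_imageI) (auto simp: inj_on_def)
  have "(\<Sum>T\<in>R. g T) = (if [] \<in> R then g [] else 0) + (\<Sum>T\<in>R - {[]}. g T)"
    using assms(1) by (simp add: sum.remove)
  also have "(\<Sum>T\<in>R - {[]}. g T) = (\<Sum>(C, L)\<in>Sigma N (\<lambda>C. Cons C -` R). g (C # L))"
    using sum.reindex_bij_betw[OF bij, of g] by (simp add: case_prod_unfold)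
  also have "\<dots> = (\<Sum>C\<in>N. \<Sum>L\<in>Cons C -` R. g (C # L))"
    by (rule sum.Sigma[OF assms(2), symmetric]) (simp add: fin)
  finally show ?thesis .
qed

lemma recursion_unique_on_finite_order:
  fixes F G :: "'b \<Rightarrow> 'a::{comm_monoid_add, times}"
  assumes fin: "finite N"
    and trans: "\<And>C D E. C \<in> N \<Longrightarrow> D \<in> N \<Longrightarrow> E \<in> N \<Longrightarrow> r C D \<Longrightarrow> r D E \<Longrightarrow> r C E"
    and irrefl: "\<And>C. \<not> r C C"
    and F: "\<And>C. C \<in> N \<Longrightarrow> F C = b C + (\<Sum>D\<in>{D\<in>N. r C D}. M C D * F D)"
    and G: "\<And>C. C \<in> N \<Longrightarrow> G C = b C + (\<Sum>D\<in>{D\<in>N. r C D}. M C D * G D)"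
  shows "C \<in> N \<Longrightarrow> F C = G C"
proof (induction "card {D\<in>N. r C D}" arbitrary: C rule: less_induct)
  case less
  have "F D = G D" if D: "D \<in> {D\<in>N. r C D}" for D
  proof (rule less.hyps)
    have "{E\<in>N. r D E} \<subset> {E\<in>N. r C E}"
      using D trans irrefl less.prems by blast
    then show "card {E\<in>N. r D E} < card {E\<in>N. r C E}"
      using fin by (intro psubset_card_mono) auto
  qed (use D in simp)
  then have "(\<Sum>D\<in>{D\<in>N. r C D}. M C D * F D) = (\<Sum>D\<in>{D\<in>N. r C D}. M C D * G D)"
    by (intro sum.cong) simp_all
  then show ?case using F[OF less.prems] G[OF less.prems] by simp
qed

section \<open>Entries and counting functions of columns\<close>

abbreviation nth_smallest :: "nat set \<Rightarrow> nat \<Rightarrow> nat" where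
  "nth_smallest A i \<equiv> sorted_list_of_set A ! i"

lemma nth_smallest_in: "finite A \<Longrightarrow> i < card A \<Longrightarrow> nth_smallest A i \<in> A"
  using nth_mem[of i "sorted_list_of_set A"] by simp

lemma nth_smallest_less_iff:
  assumes "finite A" "i < card A" "j < card A"
  shows "nth_smallest A i < nth_smallest A j \<longleftrightarrow> i < j"
proof -
  have "sorted_wrt (<) (sorted_list_of_set A)" by simp
  then show ?thesis
    using assms by (metis length_sorted_list_of_set linorder_neq_iff order.asym sorted_wrt_nth_less subset_UNIV)
qed

lemma ex_nth_smallest: "finite A \<Longrightarrow> a \<in> A \<Longrightarrow> \<exists>i<card A. nth_smallest A i = a"
  using in_set_conv_nth[of a "sorted_list_of_set A"] by simp

lemma card_less_nth_smallest:
  assumes "finite A" "i < card A"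
  shows "card {a\<in>A. a < nth_smallest A i} = i"
proof -
  have "{a\<in>A. a < nth_smallest A i} = nth_smallest A ` {..<i}"
  proof safe
    fix a assume "a \<in> A" "a < nth_smallest A i"
    then show "a \<in> nth_smallest A ` {..<i}"
      using assms ex_nth_smallest nth_smallest_less_iff by fastforce
  qed (use assms nth_smallest_in nth_smallest_less_iff in auto)
  moreover have "inj_on (nth_smallest A) {..<i}"
    using assms by (intro inj_onI) (metis lessThan_iff nat_neq_iff order.strict_trans nth_smallest_less_iff)
  ultimately show ?thesis by (simp add: card_image)
qed

definition card_upto :: "nat set \<Rightarrow> nat \<Rightarrow> nat" where
  "card_upto A k = card (A \<inter> {1..k})"

lemma card_upto_0 [simp]: "card_upto A 0 = 0"
  by (simp add: card_upto_def)

lemma card_upto_Suc: "card_upto A (Suc k) = card_upto A k + (if Suc k \<in> A then 1 else 0)"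
proof -
  have "A \<inter> {1..Suc k} = (if Suc k \<in> A then insert (Suc k) (A \<inter> {1..k}) else A \<inter> {1..k})"
    by (auto simp: le_Suc_eq)
  then show ?thesis by (simp add: card_upto_def)
qed

lemma card_upto_mono: "k \<le> l \<Longrightarrow> card_upto A k \<le> card_upto A l"
  unfolding card_upto_def by (intro card_mono) auto

lemma card_upto_le: "card_upto A k \<le> k"
  unfolding card_upto_def by (metis card_atLeastAtMost card_mono diff_Suc_1 finite_atLeastAtMost inf_le2)

lemma card_upto_cong: "(\<And>j. j \<le> k \<Longrightarrow> j \<in> A \<longleftrightarrow> j \<in> B) \<Longrightarrow> card_upto A k = card_upto B k"
  unfolding card_upto_def by (rule arg_cong[where f = card]) auto

lemma card_upto_eq_card: "A \<subseteq> {1..n} \<Longrightarrow> n \<le> k \<Longrightarrow> card_upto A k = card A"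
  unfolding card_upto_def by (rule arg_cong[where f = card]) auto

lemma card_upto_atLeastAtMost: "k \<le> n \<Longrightarrow> card_upto {1..n} k = k"
  by (simp add: card_upto_def Int_absorb2)

lemma card_upto_insert_Suc: "k \<le> m \<Longrightarrow> card_upto (insert (Suc m) E) k = card_upto E k"
  by (rule card_upto_cong) auto

lemma card_upto_eq_card_le: "0 \<notin> A \<Longrightarrow> card_upto A k = card {a\<in>A. a \<le> k}"
  unfolding card_upto_def by (rule arg_cong[where f = card]) (auto simp: Suc_le_eq intro: gr0I)

lemma nth_smallest_le_iff_card_upto:
  assumes "finite A" "0 \<notin> A" "i < card A"
  shows "nth_smallest A i \<le> k \<longleftrightarrow> i < card_upto A k"
proof
  assume le: "nth_smallest A i \<le> k"
  have "insert (nth_smallest A i) {a\<in>A. a < nth_smallest A i} \<subseteq> {a\<in>A. a \<le> k}"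
    using le nth_smallest_in[OF assms(1,3)] by auto
  then have "card (insert (nth_smallest A i) {a\<in>A. a < nth_smallest A i}) \<le> card {a\<in>A. a \<le> k}"
    using assms(1) by (intro card_mono) auto
  then show "i < card_upto A k"
    using card_less_nth_smallest[OF assms(1,3)] assms by (simp add: card_upto_eq_card_le)
next
  assume less: "i < card_upto A k"
  show "nth_smallest A i \<le> k"
  proof (rule ccontr)
    assume "\<not> nth_smallest A i \<le> k"
    then have "{a\<in>A. a \<le> k} \<subseteq> {a\<in>A. a < nth_smallest A i}" by auto
    then have "card {a\<in>A. a \<le> k} \<le> i"
      using card_mono[of "{a\<in>A. a < nth_smallest A i}"] card_less_nth_smallest[OF assms(1,3)] assms(1)
      by simp
    then show False using less assms(2) by (simp add: card_upto_eq_card_le)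
  qed
qed

lemma card_upto_nth_smallest:
  assumes "finite A" "0 \<notin> A" "i < card A"
  shows "card_upto A (nth_smallest A i) = Suc i"
proof -
  have "{a\<in>A. a \<le> nth_smallest A i} = insert (nth_smallest A i) {a\<in>A. a < nth_smallest A i}"
    using nth_smallest_in[OF assms(1,3)] by auto
  then show ?thesis
    using card_less_nth_smallest[OF assms(1,3)] assms by (simp add: card_upto_eq_card_le)
qed

definition col_le :: "nat set \<Rightarrow> nat set \<Rightarrow> bool" where
  "col_le C D \<longleftrightarrow> card D \<le> card C \<and> (\<forall>i<card D. nth_smallest C i \<le> nth_smallest D i)"

lemma col_le_refl [simp]: "col_le C C"
  by (simp add: col_le_def)

lemma col_le_trans: "col_le C D \<Longrightarrow> col_le D E \<Longrightarrow> col_le C E"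
  unfolding col_le_def by (meson le_trans order.strict_trans2)

lemma col_le_antisym:
  assumes "finite C" "finite D" "col_le C D" "col_le D C"
  shows "C = D"
proof -
  have "sorted_list_of_set C = sorted_list_of_set D"
    using assms by (intro nth_equalityI) (auto simp: col_le_def intro: order.antisym)
  then show ?thesis using assms(1,2) by (metis set_sorted_list_of_set)
qed

lemma col_le_iff_card_upto:
  assumes C: "C \<subseteq> {1..n}" and D: "D \<subseteq> {1..n}"
  shows "col_le C D \<longleftrightarrow> (\<forall>k\<le>n. card_upto D k \<le> card_upto C k)"
proof -
  have fin: "finite C" "finite D" and pos: "0 \<notin> C" "0 \<notin> D"
    using C D finite_subset by auto
  show ?thesis
  proof
    assume le: "col_le C D"
    show "\<forall>k\<le>n. card_upto D k \<le> card_upto C k"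
    proof (intro allI impI)
      fix k
      show "card_upto D k \<le> card_upto C k"
      proof (cases "card_upto D k")
        case (Suc i)
        have "i < card D" using Suc card_upto_eq_card[OF D, of "max n k"] card_upto_mono[of k "max n k" D]
          by simp
        then have "nth_smallest D i \<le> k" "i < card C" "nth_smallest C i \<le> nth_smallest D i"
          using nth_smallest_le_iff_card_upto[OF fin(2) pos(2)] Suc le by (auto simp: col_le_def)
        then have "i < card_upto C k"
          using nth_smallest_le_iff_card_upto[OF fin(1) pos(1)] by (meson order.trans)
        then show ?thesis using Suc by simp
      qed simp
    qed
  next
    assume dom: "\<forall>k\<le>n. card_upto D k \<le> card_upto C k"
    then have card: "card D \<le> card C" using card_upto_eq_card[OF C] card_upto_eq_card[OF D] by force
    have "nth_smallest C i \<le> nth_smallest D i" if i: "i < card D" for i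
    proof -
      have "nth_smallest D i \<le> n" using nth_smallest_in[OF fin(2) i] D by auto
      then have "i < card_upto C (nth_smallest D i)"
        using dom nth_smallest_le_iff_card_upto[OF fin(2) pos(2) i] by (meson order.refl order.strict_trans2)
      then show ?thesis using nth_smallest_le_iff_card_upto[OF fin(1) pos(1)] i card by simp
    qed
    with card show "col_le C D" by (simp add: col_le_def)
  qed
qed

section \<open>Leg polynomials of two-column tableaux\<close>

text \<open>In the tableau [C, D] with col_le C D, row i has a nonempty leg exactly when its entry d
  in D lies outside C, and that leg has card_upto C d + 1 - card_upto D d elements; so the leg
  polynomial is a product over D - C.\<close>

definition leg_weight :: "nat \<Rightarrow> 'a::comm_ring_1 \<Rightarrow> nat set \<Rightarrow> nat set \<Rightarrow> 'a" where
  "leg_weight m z C D = (\<Prod>k\<in>(D - C) \<inter> {1..m}. 1 - z ^ (card_upto C k + 1 - card_upto D k))"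

lemma leg_two_columns:
  assumes "col_le C D"
  shows "leg [C, D] i j =
    (if j = 0 \<and> i < card D \<and> nth_smallest D i \<notin> C
     then C \<inter> {nth_smallest C i .. nth_smallest D i} else {})"
  using assms by (cases j) (auto simp: leg_def cell_exists_def entry_def col_le_def)

lemma card_leg_two_columns:
  assumes C: "finite C" "0 \<notin> C" and D: "finite D" "0 \<notin> D"
    and le: "col_le C D" and i: "i < card D"
  shows "card (C \<inter> {nth_smallest C i .. nth_smallest D i}) =
    card_upto C (nth_smallest D i) + 1 - card_upto D (nth_smallest D i)"
proof -
  let ?c = "nth_smallest C i" and ?d = "nth_smallest D i"
  have iC: "i < card C" and cd: "?c \<le> ?d" using le i by (auto simp: col_le_def)
  have "C \<inter> {?c..?d} = {a\<in>C. a \<le> ?d} - {a\<in>C. a < ?c}" by auto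
  moreover have "{a\<in>C. a < ?c} \<subseteq> {a\<in>C. a \<le> ?d}" using cd by auto
  ultimately have "card (C \<inter> {?c..?d}) = card_upto C ?d - i"
    using C card_less_nth_smallest[OF C(1) iC] by (simp add: card_Diff_subset card_upto_eq_card_le)
  then show ?thesis using card_upto_nth_smallest[OF D i] by simp
qed

lemma leg_poly_two_columns:
  assumes C: "C \<subseteq> {1..n}" and D: "D \<subseteq> {1..n}" and le: "col_le C D"
  shows "leg_poly [C, D] y = leg_weight n y C D"
proof -
  have fin: "finite C" "finite D" and pos: "0 \<notin> C" "0 \<notin> D"
    using C D finite_subset by auto
  define J where "J = {i. i < card D \<and> nth_smallest D i \<notin> C}"
  have "cell_exists [C, D] i j \<and> leg [C, D] i j \<noteq> {} \<longleftrightarrow> j = 0 \<and> i \<in> J" for i j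
  proof
    assume "j = 0 \<and> i \<in> J"
    then have "j = 0" "i < card D" "i < card C" "nth_smallest C i \<le> nth_smallest D i"
      "nth_smallest D i \<notin> C"
      using le by (auto simp: J_def col_le_def)
    moreover have "nth_smallest C i \<in> C \<inter> {nth_smallest C i .. nth_smallest D i}"
      using nth_smallest_in[OF fin(1) \<open>i < card C\<close>] \<open>nth_smallest C i \<le> nth_smallest D i\<close> by simp
    ultimately show "cell_exists [C, D] i j \<and> leg [C, D] i j \<noteq> {}"
      by (auto simp: leg_two_columns[OF le] cell_exists_def)
  qed (auto simp: leg_two_columns[OF le] J_def split: if_splits)
  then have cells: "{(i, j). cell_exists [C, D] i j \<and> leg [C, D] i j \<noteq> {}} = (\<lambda>i. (i, 0)) ` J"
    by auto
  have bij: "bij_betw (nth_smallest D) J ((D - C) \<inter> {1..n})"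
  proof (rule bij_betw_imageI)
    show "inj_on (nth_smallest D) J"
      using fin(2) by (intro inj_onI) (metis J_def mem_Collect_eq nat_neq_iff nth_smallest_less_iff)
    show "nth_smallest D ` J = (D - C) \<inter> {1..n}"
      using D nth_smallest_in[OF fin(2)] ex_nth_smallest[OF fin(2)] by (fastforce simp: J_def)
  qed
  have "leg_poly [C, D] y = (\<Prod>i\<in>J. 1 - y ^ card (leg [C, D] i 0))"
    unfolding leg_poly_def cells by (subst prod.reindex) (auto intro: inj_onI)
  also have "\<dots> = (\<Prod>i\<in>J. 1 - y ^ (card_upto C (nth_smallest D i) + 1 - card_upto D (nth_smallest D i)))"
    using card_leg_two_columns[OF fin(1) pos(1) fin(2) pos(2) le]
    by (intro prod.cong) (simp_all add: leg_two_columns[OF le] J_def)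
  also have "\<dots> = leg_weight n y C D"
    unfolding leg_weight_def by (rule prod.reindex_bij_betw[OF bij])
  finally show ?thesis .
qed

section \<open>The inversion formula\<close>

lemma leg_weight_Suc:
  "leg_weight (Suc m) z C D = leg_weight m z C D *
     (if Suc m \<in> D - C then 1 - z ^ (card_upto C (Suc m) + 1 - card_upto D (Suc m)) else 1)"
proof -
  have "(D - C) \<inter> {1..Suc m} =
      (if Suc m \<in> D - C then insert (Suc m) ((D - C) \<inter> {1..m}) else (D - C) \<inter> {1..m})"
    by (auto simp: le_Suc_eq)
  then show ?thesis by (simp add: leg_weight_def mult.commute)
qed

lemma leg_weight_cong:
  assumes "\<And>k. k \<le> m \<Longrightarrow> (k \<in> C \<longleftrightarrow> k \<in> C') \<and> (k \<in> D \<longleftrightarrow> k \<in> D')"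
  shows "leg_weight m z C D = leg_weight m z C' D'"
proof -
  have "(D - C) \<inter> {1..m} = (D' - C') \<inter> {1..m}" using assms by auto
  moreover have "card_upto C k = card_upto C' k" "card_upto D k = card_upto D' k" if "k \<le> m" for k
    using assms that by (auto intro: card_upto_cong)
  ultimately show ?thesis unfolding leg_weight_def by (intro prod.cong) auto
qed

definition defect :: "nat \<Rightarrow> nat set \<Rightarrow> nat" where
  "defect m E = (\<Sum>k<m. k - card_upto E k)"

lemma defect_Suc: "defect (Suc m) E = defect m E + (m - card_upto E m)"
  by (simp add: defect_def)

lemma defect_cong: "(\<And>k. k < m \<Longrightarrow> k \<in> E \<longleftrightarrow> k \<in> E') \<Longrightarrow> defect m E = defect m E'"
  unfolding defect_def by (intro sum.cong refl) (metis card_upto_cong lessThan_iff order_le_less_trans)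

lemma defect_empty: "defect m {} = m choose 2"
proof -
  have "(\<Sum>k<m. k) = m choose 2"
    by (induction m) (simp_all add: numeral_2_eq_2)
  then show ?thesis by (simp add: defect_def card_upto_def)
qed

lemma defect_atLeastAtMost: "defect n {1..n} = 0"
  unfolding defect_def
  by (intro sum.neutral ballI) (metis card_upto_atLeastAtMost diff_self_eq_0 lessThan_iff less_imp_le)

definition sign_weight :: "nat \<Rightarrow> 'a::comm_ring_1 \<Rightarrow> nat set \<Rightarrow> 'a" where
  "sign_weight m y E = (-1) ^ card E * y ^ defect m E"

lemma sign_weight_empty: "sign_weight n y {} = y ^ (n choose 2)"
  by (simp add: sign_weight_def defect_empty)

lemma sign_weight_atLeastAtMost: "sign_weight n y {1..n} = (-1) ^ n"
  unfolding sign_weight_def defect_atLeastAtMost by simp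

definition between :: "nat \<Rightarrow> nat set \<Rightarrow> nat set \<Rightarrow> nat set \<Rightarrow> bool" where
  "between m C D E \<longleftrightarrow> (\<forall>k\<le>m. card_upto D k \<le> card_upto E k \<and> card_upto E k \<le> card_upto C k)"

lemma between_Suc:
  "between (Suc m) C D E \<longleftrightarrow> between m C D E \<and>
     card_upto D (Suc m) \<le> card_upto E (Suc m) \<and> card_upto E (Suc m) \<le> card_upto C (Suc m)"
  by (auto simp: between_def le_Suc_eq)

definition interval_term :: "nat \<Rightarrow> 'a::field \<Rightarrow> nat set \<Rightarrow> nat set \<Rightarrow> nat set \<Rightarrow> 'a" where
  "interval_term m y C D E =
     (if between m C D E
      then leg_weight m (inverse y) C E * sign_weight m y E * leg_weight m y E D else 0)"

definition interval_sum :: "nat \<Rightarrow> 'a::field \<Rightarrow> nat set \<Rightarrow> nat set \<Rightarrow> 'a" where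
  "interval_sum m y C D = (\<Sum>E\<in>Pow {1..m}. interval_term m y C D E)"

definition interval_factor :: "'a::field \<Rightarrow> nat set \<Rightarrow> nat set \<Rightarrow> nat \<Rightarrow> 'a" where
  "interval_factor y C D k =
     (let z = y ^ (card_upto C (k - 1) - card_upto D (k - 1))
      in if k \<in> C then if k \<in> D then z else 0 else if k \<in> D then 1 - z else 1)"

text \<open>Deciding whether m + 1 belongs to E changes the term only by local factors at m + 1.
  When the new E leaves the interval between C and D, the truncated exponent of its new
  leg factor is 0 and the factor 1 - z^0 vanishes, so the two choices always add up
  to a factor independent of E.\<close>

lemma interval_term_Suc:
  fixes y :: "'a::field"
  assumes y: "y \<noteq> 0" and E: "E \<subseteq> {1..m}"
  shows "interval_term (Suc m) y C D E + interval_term (Suc m) y C D (insert (Suc m) E) =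
    interval_term m y C D E *
      ((-1) ^ (if Suc m \<in> C then 1 else 0) * y ^ (m - card_upto C m) * interval_factor y C D (Suc m))"
proof (cases "between m C D E")
  case False
  moreover have "between m C D (insert (Suc m) E) \<longleftrightarrow> between m C D E"
    by (simp add: between_def card_upto_insert_Suc)
  ultimately show ?thesis by (simp add: interval_term_def between_Suc)
next
  case btw: True
  let ?M = "Suc m" and ?E' = "insert (Suc m) E"
  define a b e where "a = card_upto C m" and "b = card_upto D m" and "e = card_upto E m"
  define \<tau> where "\<tau> = interval_term m y C D E"
  have ME: "?M \<notin> E" and finE: "finite E" using E finite_subset by auto
  have ba: "b \<le> e" "e \<le> a" and am: "a \<le> m"
    using btw card_upto_le[of C m] by (simp_all add: between_def a_def b_def e_def)
  obtain i j l where i: "e = b + i" and j: "a = e + j" and l: "m = a + l"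
    using ba am le_Suc_ex by metis
  have cE: "card_upto E ?M = e" and cE': "card_upto ?E' ?M = Suc e"
    using ME by (simp_all add: card_upto_Suc e_def card_upto_insert_Suc)
  have same_m: "leg_weight m z C ?E' = leg_weight m z C E" "leg_weight m z ?E' D = leg_weight m z E D"
    "defect m ?E' = defect m E" "between m C D ?E' = between m C D E" "card_upto ?E' m = e" for z :: 'a
    by (auto intro!: leg_weight_cong defect_cong simp: between_def card_upto_insert_Suc e_def)
  have tE: "interval_term ?M y C D E =
      (if card_upto D ?M \<le> e \<and> e \<le> card_upto C ?M then
         \<tau> * y ^ (m - e) * (if ?M \<in> D then 1 - y ^ (e + 1 - card_upto D ?M) else 1) else 0)"
    using btw ME cE by (simp add: interval_term_def between_Suc leg_weight_Suc sign_weight_def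
        defect_Suc e_def \<tau>_def power_add mult_ac)
  have tE': "interval_term ?M y C D ?E' =
      (if card_upto D ?M \<le> Suc e \<and> Suc e \<le> card_upto C ?M then
         - (\<tau> * y ^ (m - e) *
            (if ?M \<notin> C then 1 - inverse y ^ (card_upto C ?M + 1 - Suc e) else 1)) else 0)"
    using btw ME finE cE' same_m
    by (simp add: interval_term_def between_Suc leg_weight_Suc sign_weight_def
        defect_Suc \<tau>_def power_add mult_ac)
  have cancel: "y ^ (l + j) * inverse y ^ j = y ^ l" for l j :: nat
    using y by (simp add: power_add power_inverse field_simps)
  have factor: "interval_factor y C D ?M =
      (if ?M \<in> C then if ?M \<in> D then y ^ (i + j) else 0 else if ?M \<in> D then 1 - y ^ (i + j) else 1)"
    using i j by (simp add: interval_factor_def a_def b_def)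
  have cC: "card_upto C ?M = a + (if ?M \<in> C then 1 else 0)"
    and cD: "card_upto D ?M = b + (if ?M \<in> D then 1 else 0)"
    by (simp_all add: card_upto_Suc a_def b_def)
  show ?thesis
    unfolding tE tE' factor cC cD \<tau>_def[symmetric] a_def[symmetric] unfolding l j i
    using cancel[of l j]
    by (cases "?M \<in> C"; cases "?M \<in> D"; cases i; cases j) (auto simp: power_add algebra_simps)
qed

lemma interval_sum_eq_prod:
  fixes y :: "'a::field"
  assumes y: "y \<noteq> 0"
  shows "interval_sum m y C D =
    (-1) ^ card_upto C m * y ^ defect m C * (\<Prod>k\<in>{1..m}. interval_factor y C D k)"
proof (induction m)
  case 0
  show ?case
    by (simp add: interval_sum_def interval_term_def between_def leg_weight_def sign_weight_def defect_def)
next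
  case (Suc m)
  let ?c = "(-1) ^ (if Suc m \<in> C then 1 else 0) * y ^ (m - card_upto C m) * interval_factor y C D (Suc m)"
  have "{1..Suc m} = insert (Suc m) {1..m}" by auto
  then have "interval_sum (Suc m) y C D =
      (\<Sum>E\<in>Pow {1..m}. interval_term (Suc m) y C D E + interval_term (Suc m) y C D (insert (Suc m) E))"
    unfolding interval_sum_def by (simp add: sum_Pow_insert)
  also have "\<dots> = interval_sum m y C D * ?c"
    unfolding interval_sum_def sum_distrib_right by (intro sum.cong refl interval_term_Suc[OF y]) simp
  also have "\<dots> = (-1) ^ card_upto C (Suc m) * y ^ defect (Suc m) C *
      (\<Prod>k\<in>{1..Suc m}. interval_factor y C D k)"
    by (simp add: Suc.IH card_upto_Suc defect_Suc power_add mult_ac)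
  finally show ?case .
qed

lemma interval_sum_self:
  fixes y :: "'a::field"
  assumes "y \<noteq> 0" and "C \<subseteq> {1..m}"
  shows "interval_sum m y C C = sign_weight m y C"
proof -
  have "interval_factor y C C k = 1" for k by (simp add: interval_factor_def)
  then show ?thesis
    using assms by (simp add: interval_sum_eq_prod sign_weight_def card_upto_eq_card)
qed

lemma interval_sum_eq_0:
  fixes y :: "'a::field"
  assumes y: "y \<noteq> 0" and C: "C \<subseteq> {1..m}" and D: "D \<subseteq> {1..m}"
    and dom: "\<forall>k\<le>m. card_upto D k \<le> card_upto C k" and "C \<noteq> D"
  shows "interval_sum m y C D = 0"
proof -
  obtain k0 where k0: "k0 \<in> {1..m}" "k0 \<in> C \<longleftrightarrow> k0 \<notin> D"
    using C D \<open>C \<noteq> D\<close> by blast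
  have "card_upto C k0 \<noteq> card_upto D k0 \<or> card_upto C (k0 - 1) \<noteq> card_upto D (k0 - 1)"
    using k0 card_upto_Suc[of C "k0 - 1"] card_upto_Suc[of D "k0 - 1"] by auto
  then obtain k1 where k1: "k1 \<le> m" "card_upto C k1 \<noteq> card_upto D k1"
    using k0(1) by (metis atLeastAtMost_iff diff_le_self order_trans)
  define k where "k = (LEAST k. card_upto C k \<noteq> card_upto D k)"
  have k: "card_upto C k \<noteq> card_upto D k" "k \<le> k1"
    unfolding k_def by (rule LeastI[of _ k1], rule k1(2), rule Least_le, rule k1(2))
  then obtain k' where k': "k = Suc k'" by (metis card_upto_0 not0_implies_Suc)
  then have "card_upto C k' = card_upto D k'"
    using not_less_Least[of k' "\<lambda>k. card_upto C k \<noteq> card_upto D k"] by (simp add: k_def)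
  moreover have "card_upto D k \<le> card_upto C k" using dom k k1 by simp
  ultimately have "k \<in> C - D" using k unfolding k' card_upto_Suc by (auto split: if_splits)
  then have "interval_factor y C D k = 0" by (simp add: interval_factor_def)
  moreover have "k \<in> {1..m}" using k k1 k' by simp
  ultimately show ?thesis by (auto simp: interval_sum_eq_prod[OF y])
qed

definition edge_weight :: "'a::comm_ring_1 \<Rightarrow> nat set \<Rightarrow> nat set \<Rightarrow> 'a" where
  "edge_weight y C D = (if col_le C D then leg_poly [C, D] y else 0)"

lemma edge_weight_self: "edge_weight y C C = 1"
proof -
  have "leg [C, C] i j = {}" for i j
    by (auto simp: leg_def cell_exists_def entry_def nth_smallest_in card_ge_0_finite)
  then show ?thesis by (simp add: edge_weight_def leg_poly_def)
qed

lemma edge_weight_empty_right: "edge_weight y C {} = 1"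
proof -
  have "leg [C, {}] i j = {}" for i j
    by (cases j) (simp_all add: leg_def cell_exists_def)
  then show ?thesis by (simp add: edge_weight_def col_le_def leg_poly_def)
qed

lemma edge_weight_empty_left: "finite D \<Longrightarrow> edge_weight y {} D = (if D = {} then 1 else 0)"
  using edge_weight_self[of y "{}"] by (auto simp: edge_weight_def col_le_def)

lemma edge_weight_atLeastAtMost_left:
  assumes "D \<subseteq> {1..n}"
  shows "edge_weight y {1..n} D = 1"
proof -
  have le: "col_le {1..n} D"
    unfolding col_le_iff_card_upto[OF order_refl assms] by (metis card_upto_atLeastAtMost card_upto_le)
  have "edge_weight y {1..n} D = leg_weight n y {1..n} D"
    using le leg_poly_two_columns[OF order_refl assms le] by (simp add: edge_weight_def)
  also have "\<dots> = 1"
    unfolding leg_weight_def Int_commute[of "D - _"] Diff_disjoint by simp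
  finally show ?thesis .
qed

lemma edge_weight_inversion:
  fixes y :: "'a::field"
  assumes y: "y \<noteq> 0" and C: "C \<subseteq> {1..n}" and E: "E \<subseteq> {1..n}"
  shows "(\<Sum>D\<in>Pow {1..n}. edge_weight (inverse y) C D * sign_weight n y D * edge_weight y D E) =
    (if C = E then sign_weight n y C else 0)"
proof -
  have "edge_weight (inverse y) C D * sign_weight n y D * edge_weight y D E =
      (if col_le C E then interval_term n y C E D else 0)" if "D \<in> Pow {1..n}" for D
  proof -
    have D: "D \<subseteq> {1..n}" using that by simp
    have btw: "between n C E D \<longleftrightarrow> col_le C D \<and> col_le D E"
      unfolding between_def col_le_iff_card_upto[OF C D] col_le_iff_card_upto[OF D E] by auto
    show ?thesis
      using btw col_le_trans[of C D E]
      by (auto simp: edge_weight_def interval_term_def leg_poly_two_columns[OF C D]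
          leg_poly_two_columns[OF D E])
  qed
  then have "(\<Sum>D\<in>Pow {1..n}. edge_weight (inverse y) C D * sign_weight n y D * edge_weight y D E) =
      (if col_le C E then interval_sum n y C E else 0)"
    by (simp add: interval_sum_def)
  also have "\<dots> = (if C = E then sign_weight n y C else 0)"
    using interval_sum_self[OF y C] interval_sum_eq_0[OF y C E] col_le_iff_card_upto[OF C E] by auto
  finally show ?thesis .
qed

lemma edge_weight_inversion_sum:
  fixes y :: "'a::field"
  assumes y: "y \<noteq> 0" and C: "C \<subseteq> {1..n}"
  shows "(\<Sum>D\<in>Pow {1..n}. edge_weight (inverse y) C D * sign_weight n y D *
      (\<Sum>E\<in>Pow {1..n}. edge_weight y D E * v E)) = sign_weight n y C * v C"
proof -
  let ?a = "\<lambda>D. edge_weight (inverse y) C D * sign_weight n y D"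
  have "(\<Sum>D\<in>Pow {1..n}. ?a D * (\<Sum>E\<in>Pow {1..n}. edge_weight y D E * v E)) =
      (\<Sum>D\<in>Pow {1..n}. \<Sum>E\<in>Pow {1..n}. ?a D * edge_weight y D E * v E)"
    by (simp add: sum_distrib_left mult.assoc)
  also have "\<dots> = (\<Sum>E\<in>Pow {1..n}. (\<Sum>D\<in>Pow {1..n}. ?a D * edge_weight y D E) * v E)"
    by (subst sum.swap) (simp add: sum_distrib_right)
  also have "\<dots> = (\<Sum>E\<in>Pow {1..n}. if E = C then sign_weight n y C * v C else 0)"
  proof (intro sum.cong refl)
    fix E assume "E \<in> Pow {1..n}"
    then show "(\<Sum>D\<in>Pow {1..n}. ?a D * edge_weight y D E) * v E =
        (if E = C then sign_weight n y C * v C else 0)"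
      using edge_weight_inversion[OF y C, of E] by simp
  qed
  also have "\<dots> = sign_weight n y C * v C" using C by simp
  finally show ?thesis .
qed

section \<open>Reduced tableaux as chains of columns\<close>

lemma is_ssyt_Cons_Cons:
  "is_ssyt n (C # D # L) \<longleftrightarrow> C \<noteq> {} \<and> C \<subseteq> {1..n} \<and> col_le C D \<and> is_ssyt n (D # L)"
  unfolding is_ssyt_def col_le_def entry_def by (simp add: All_less_Suc2 conj_ac)

lemma is_ssyt_col_le:
  assumes "is_ssyt n (D # L)" "E \<in> set L"
  shows "col_le D E"
  using assms
proof (induction L arbitrary: D)
  case (Cons F L)
  then have "col_le D F" "is_ssyt n (F # L)" by (simp_all add: is_ssyt_Cons_Cons)
  with Cons show ?case by (auto intro: col_le_trans)
qed simp

lemma is_ssyt_subset: "is_ssyt n T \<Longrightarrow> C \<in> set T \<Longrightarrow> C \<noteq> {} \<and> C \<subseteq> {1..n}"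
  by (simp add: is_ssyt_def)

lemma Nil_in_rSSYT: "[] \<in> rSSYT n"
  by (simp add: rSSYT_def is_ssyt_def)

lemma singleton_in_rSSYT_iff: "[C] \<in> rSSYT n \<longleftrightarrow> C \<noteq> {} \<and> C \<subseteq> {1..n}"
  by (simp add: rSSYT_def is_ssyt_def)

lemma Cons_Cons_in_rSSYT_iff:
  "C # D # L \<in> rSSYT n \<longleftrightarrow>
     C \<noteq> {} \<and> C \<subseteq> {1..n} \<and> col_le C D \<and> C \<noteq> D \<and> D # L \<in> rSSYT n"
proof
  assume "C \<noteq> {} \<and> C \<subseteq> {1..n} \<and> col_le C D \<and> C \<noteq> D \<and> D # L \<in> rSSYT n"
  then have C: "C \<noteq> {}" "C \<subseteq> {1..n}" "col_le C D" "C \<noteq> D" and DL: "is_ssyt n (D # L)" "distinct (D # L)"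
    by (auto simp: rSSYT_def)
  have "C \<notin> set L"
  proof
    assume "C \<in> set L"
    then have "col_le D C" using is_ssyt_col_le[OF DL(1)] by blast
    moreover have "finite C" "finite D"
      using C is_ssyt_subset[OF DL(1), of D] finite_subset by auto
    ultimately show False using C col_le_antisym by blast
  qed
  with C DL show "C # D # L \<in> rSSYT n"
    by (auto simp: rSSYT_def is_ssyt_Cons_Cons)
qed (auto simp: rSSYT_def is_ssyt_Cons_Cons)

lemma finite_rSSYT: "finite (rSSYT n)"
proof (rule finite_subset)
  show "rSSYT n \<subseteq> {T. set T \<subseteq> Pow {1..n} \<and> length T \<le> card (Pow {1..n})}"
  proof safe
    fix T assume T: "T \<in> rSSYT n"
    then show subset: "C \<in> set T \<Longrightarrow> x \<in> C \<Longrightarrow> x \<in> {1..n}" for C x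
      using is_ssyt_subset[of n T C] by (auto simp: rSSYT_def)
    have "length T = card (set T)" using T by (simp add: rSSYT_def distinct_card)
    also have "\<dots> \<le> card (Pow {1..n})" using subset by (intro card_mono) auto
    finally show "length T \<le> card (Pow {1..n})" .
  qed
qed (simp add: finite_lists_length_le)

definition leg_cells :: "nat set list \<Rightarrow> (nat \<times> nat) set" where
  "leg_cells T = {(i, j). cell_exists T i j \<and> leg T i j \<noteq> {}}"

lemma leg_poly_leg_cells: "leg_poly T y = (\<Prod>(i, j)\<in>leg_cells T. 1 - y ^ card (leg T i j))"
  by (simp add: leg_poly_def leg_cells_def)

lemma finite_leg_cells: "finite (leg_cells T)"
proof (rule finite_subset)
  have "i < Max (insert 0 (card ` set T))" if "j < length T" "i < card (T ! j)" for i j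
    using that by (intro order_less_le_trans[OF _ Max_ge]) auto
  then show "leg_cells T \<subseteq> {..<Max (insert 0 (card ` set T))} \<times> {..<length T}"
    by (auto simp: leg_cells_def cell_exists_def)
qed simp

lemma leg_poly_Nil: "leg_poly [] y = 1"
  by (simp add: leg_poly_def cell_exists_def)

lemma leg_poly_singleton: "leg_poly [C] y = 1"
  by (simp add: leg_poly_def leg_def cell_exists_def)

lemma leg_cells_Cons_Suc: "(i, Suc j) \<in> leg_cells (C # T) \<longleftrightarrow> (i, j) \<in> leg_cells T"
  by (simp add: leg_cells_def leg_def cell_exists_def entry_def)

lemma leg_cells_Cons_Cons_0: "(i, 0) \<in> leg_cells (C # D # L) \<longleftrightarrow> (i, 0) \<in> leg_cells [C, D]"
  by (simp add: leg_cells_def leg_def cell_exists_def entry_def)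

lemma leg_cells_two_columns: "(i, j) \<in> leg_cells [C, D] \<Longrightarrow> j = 0"
  by (auto simp: leg_cells_def leg_def cell_exists_def split: if_splits)

lemma leg_cells_Cons_Cons:
  "leg_cells (C # D # L) = leg_cells [C, D] \<union> apsnd Suc ` leg_cells (D # L)"
proof (intro set_eqI)
  fix p :: "nat \<times> nat"
  obtain i j where p: "p = (i, j)" by fastforce
  show "p \<in> leg_cells (C # D # L) \<longleftrightarrow> p \<in> leg_cells [C, D] \<union> apsnd Suc ` leg_cells (D # L)"
  proof (cases j)
    case 0
    then show ?thesis unfolding p using leg_cells_Cons_Cons_0 by force
  next
    case (Suc j')
    have "(i, Suc j') \<notin> leg_cells [C, D]" using leg_cells_two_columns by blast
    moreover have "(i, Suc j') \<in> apsnd Suc ` X \<longleftrightarrow> (i, j') \<in> X" for X by force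
    ultimately show ?thesis unfolding p Suc by (simp add: leg_cells_Cons_Suc)
  qed
qed

lemma leg_poly_Cons_Cons: "leg_poly (C # D # L) y = leg_poly [C, D] y * leg_poly (D # L) y"
proof -
  let ?f = "\<lambda>(i, j). 1 - y ^ card (leg (C # D # L) i j)"
  have leg_0: "leg (C # D # L) i 0 = leg [C, D] i 0" and leg_Suc: "leg (C # T) i (Suc j) = leg T i j"
    for T i j by (simp_all add: leg_def cell_exists_def entry_def)
  have disjoint: "leg_cells [C, D] \<inter> apsnd Suc ` leg_cells (D # L) = {}"
  proof -
    have "snd p = 0" if "p \<in> leg_cells [C, D]" for p
      using that leg_cells_two_columns[of "fst p" "snd p"] by simp
    moreover have "snd p \<noteq> 0" if "p \<in> apsnd Suc ` X" for p X
      using that by auto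
    ultimately show ?thesis by blast
  qed
  have "leg_poly (C # D # L) y = prod ?f (leg_cells [C, D]) * prod ?f (apsnd Suc ` leg_cells (D # L))"
    unfolding leg_poly_leg_cells leg_cells_Cons_Cons[of C D L]
    using finite_leg_cells disjoint by (intro prod.union_disjoint) auto
  also have "prod ?f (leg_cells [C, D]) = leg_poly [C, D] y"
    unfolding leg_poly_leg_cells
  proof (intro prod.cong refl)
    fix p assume "p \<in> leg_cells [C, D]"
    then obtain i where "p = (i, 0)" using leg_cells_two_columns by (cases p) blast
    then show "?f p = (\<lambda>(i, j). 1 - y ^ card (leg [C, D] i j)) p" by (simp add: leg_0)
  qed
  also have "prod ?f (apsnd Suc ` leg_cells (D # L)) = leg_poly (D # L) y"
    unfolding leg_poly_leg_cells
    using inj_on_subset[of "apsnd Suc" UNIV "leg_cells (D # L)"]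
    by (subst prod.reindex) (simp_all add: case_prod_beta leg_Suc)
  finally show ?thesis .
qed

section \<open>Chain sums and their reciprocity\<close>

definition columns :: "nat \<Rightarrow> nat set set" where
  "columns n = {C. C \<noteq> {} \<and> C \<subseteq> {1..n}}"

lemma finite_columns: "finite (columns n)"
  by (rule finite_subset[of _ "Pow {1..n}"]) (auto simp: columns_def)

lemma Pow_eq_insert_columns: "Pow {1..n} = insert {} (columns n)" and empty_notin_columns: "{} \<notin> columns n"
  by (auto simp: columns_def)

definition chain_sum :: "nat \<Rightarrow> 'a::comm_ring_1 \<Rightarrow> (nat set \<Rightarrow> 'a) \<Rightarrow> nat set \<Rightarrow> 'a" where
  "chain_sum n y t C = (\<Sum>L\<in>Cons C -` rSSYT n. leg_poly (C # L) y * prod_list (map t L))"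

lemma head_in_columns: "C # L \<in> rSSYT n \<Longrightarrow> C \<in> columns n"
  using is_ssyt_subset[of n "C # L" C] by (simp add: rSSYT_def columns_def)

lemma HLS_eq_chain_sum:
  fixes x :: "nat set \<Rightarrow> 'a::field"
  defines "t \<equiv> \<lambda>C. x C / (1 - x C)"
  shows "HLS n y x = 1 + (\<Sum>C\<in>columns n. t C * chain_sum n y t C)"
proof -
  have "HLS n y x = (\<Sum>T\<in>rSSYT n. leg_poly T y * prod_list (map t T))"
    by (simp add: HLS_def t_def)
  also have "\<dots> = 1 + (\<Sum>C\<in>columns n. \<Sum>L\<in>Cons C -` rSSYT n. leg_poly (C # L) y * prod_list (map t (C # L)))"
    by (subst sum_lists_by_head[OF finite_rSSYT finite_columns head_in_columns])
      (simp_all add: Nil_in_rSSYT leg_poly_Nil)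
  also have "\<dots> = 1 + (\<Sum>C\<in>columns n. t C * chain_sum n y t C)"
    by (simp add: chain_sum_def sum_distrib_left mult_ac)
  finally show ?thesis .
qed

lemma chain_sum_rec:
  assumes C: "C \<in> columns n"
  shows "chain_sum n y t C =
    1 + (\<Sum>D\<in>{D\<in>columns n. col_le C D \<and> D \<noteq> C}. leg_poly [C, D] y * t D * chain_sum n y t D)"
proof -
  let ?R = "Cons C -` rSSYT n"
  have tails: "Cons D -` ?R = (if col_le C D \<and> D \<noteq> C then Cons D -` rSSYT n else {})" for D
    using C by (auto simp: Cons_Cons_in_rSSYT_iff columns_def)
  have fin: "finite ?R" by (rule finite_vimageI[OF finite_rSSYT]) simp
  have heads: "D \<in> columns n" if "D # L \<in> ?R" for D L
    using that head_in_columns[of D L n] by (simp add: Cons_Cons_in_rSSYT_iff)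
  define g where "g L = leg_poly (C # L) y * prod_list (map t L)" for L
  have "chain_sum n y t C = (if [] \<in> ?R then g [] else 0) + (\<Sum>D\<in>columns n. \<Sum>L\<in>Cons D -` ?R. g (D # L))"
    unfolding chain_sum_def g_def[symmetric] by (rule sum_lists_by_head[OF fin finite_columns heads])
  also have "(if [] \<in> ?R then g [] else 0) = 1"
    using C by (simp add: g_def singleton_in_rSSYT_iff columns_def leg_poly_singleton)
  also have "(\<Sum>D\<in>columns n. \<Sum>L\<in>Cons D -` ?R. g (D # L)) = (\<Sum>D\<in>columns n. if col_le C D \<and> D \<noteq> C
      then leg_poly [C, D] y * t D * chain_sum n y t D else 0)"
  proof (intro sum.cong refl)
    fix D
    show "(\<Sum>L\<in>Cons D -` ?R. g (D # L)) =
        (if col_le C D \<and> D \<noteq> C then leg_poly [C, D] y * t D * chain_sum n y t D else 0)"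
    proof (cases "col_le C D \<and> D \<noteq> C")
      case True
      have "g (D # L) = leg_poly [C, D] y * t D * (leg_poly (D # L) y * prod_list (map t L))" for L
        by (simp add: g_def leg_poly_Cons_Cons[of C D L] mult_ac)
      then show ?thesis using True by (simp add: tails chain_sum_def sum_distrib_left)
    next
      case False
      then show ?thesis by (simp only: tails if_not_P if_False sum.empty)
    qed
  qed
  also have "\<dots> = (\<Sum>D\<in>{D\<in>columns n. col_le C D \<and> D \<noteq> C}. leg_poly [C, D] y * t D * chain_sum n y t D)"
    by (simp only: sum.inter_filter[OF finite_columns])
  finally show ?thesis .
qed

definition chain_rec :: "nat \<Rightarrow> 'a::comm_ring_1 \<Rightarrow> (nat set \<Rightarrow> 'a) \<Rightarrow> (nat set \<Rightarrow> 'a) \<Rightarrow> bool" where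
  "chain_rec n y t G \<longleftrightarrow> (\<forall>C\<in>columns n.
     G C = 1 + (\<Sum>D\<in>{D\<in>columns n. col_le C D \<and> D \<noteq> C}. leg_poly [C, D] y * t D * G D))"

lemma chain_rec_chain_sum: "chain_rec n y t (chain_sum n y t)"
  by (simp add: chain_rec_def chain_sum_rec)

lemma chain_rec_unique:
  assumes F: "chain_rec n y t F" and G: "chain_rec n y t G" and C: "C \<in> columns n"
  shows "F C = G C"
proof (rule recursion_unique_on_finite_order[where r = "\<lambda>C D. col_le C D \<and> D \<noteq> C"
      and b = "\<lambda>_. 1" and M = "\<lambda>C D. leg_poly [C, D] y * t D", OF finite_columns _ _ _ _ C])
  fix C D E assume "C \<in> columns n" "D \<in> columns n" "E \<in> columns n"
    and "col_le C D \<and> D \<noteq> C" "col_le D E \<and> E \<noteq> D"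
  moreover have "finite C" "finite D" using \<open>C \<in> columns n\<close> \<open>D \<in> columns n\<close>
    by (auto simp: columns_def intro: finite_subset)
  ultimately show "col_le C E \<and> E \<noteq> C" using col_le_trans col_le_antisym by blast
qed (use F G in \<open>auto simp only: chain_rec_def\<close>)

lemma sum_edge_weight:
  assumes "C \<in> columns n"
  shows "(\<Sum>D\<in>columns n. edge_weight y C D * f D) =
    f C + (\<Sum>D\<in>{D\<in>columns n. col_le C D \<and> D \<noteq> C}. leg_poly [C, D] y * f D)"
proof -
  have "(\<Sum>D\<in>columns n. edge_weight y C D * f D) =
      f C + (\<Sum>D\<in>columns n - {C}. edge_weight y C D * f D)"
    using assms by (simp add: sum.remove finite_columns edge_weight_self)
  also have "(\<Sum>D\<in>columns n - {C}. edge_weight y C D * f D) =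
      (\<Sum>D\<in>{D\<in>columns n. col_le C D \<and> D \<noteq> C}. leg_poly [C, D] y * f D)"
    by (rule sum.mono_neutral_cong_right) (auto simp: finite_columns edge_weight_def)
  finally show ?thesis .
qed

lemma chain_rec_iff_edge_weight:
  "chain_rec n y t G \<longleftrightarrow>
    (\<forall>C\<in>columns n. (1 + t C) * G C = 1 + (\<Sum>D\<in>columns n. edge_weight y C D * t D * G D))"
  unfolding chain_rec_def
proof (intro ball_cong refl)
  fix C assume "C \<in> columns n"
  then have "(\<Sum>D\<in>columns n. edge_weight y C D * t D * G D) =
      t C * G C + (\<Sum>D\<in>{D\<in>columns n. col_le C D \<and> D \<noteq> C}. leg_poly [C, D] y * t D * G D)"
    using sum_edge_weight[of C n y "\<lambda>D. t D * G D"] by (simp add: mult.assoc)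
  then show "G C = 1 + (\<Sum>D\<in>{D\<in>columns n. col_le C D \<and> D \<noteq> C}. leg_poly [C, D] y * t D * G D) \<longleftrightarrow>
      (1 + t C) * G C = 1 + (\<Sum>D\<in>columns n. edge_weight y C D * t D * G D)"
    by (auto simp: algebra_simps)
qed

lemma chain_rec_reciprocity:
  fixes y :: "'a::field"
  assumes y: "y \<noteq> 0" and K: "chain_rec n y t K"
    and t': "\<And>C. C \<in> columns n \<Longrightarrow> t' C = -1 - t C"
  shows "chain_rec n (inverse y) t' (\<lambda>C. - sign_weight n y C * K C / y ^ (n choose 2))"
proof -
  let ?S = "sign_weight n y" and ?c = "y ^ (n choose 2)"
  \<comment> \<open>The empty column lies above every column with edge weight 1, so extending t * K by 1
    at the empty column makes the recursion for K a matrix identity on all subsets.\<close>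
  define v where "v E = (if E = {} then 1 else t E * K E)" for E
  have K_rec: "(1 + t D) * K D = 1 + (\<Sum>E\<in>columns n. edge_weight y D E * t E * K E)"
    if "D \<in> columns n" for D
    using K that by (simp add: chain_rec_iff_edge_weight)
  have edge_weight_v: "(\<Sum>E\<in>Pow {1..n}. edge_weight y D E * v E) = (if D = {} then 1 else (1 + t D) * K D)"
    if "D \<in> Pow {1..n}" for D
  proof (cases "D = {}")
    case True
    have "edge_weight y {} E * v E = (if E = {} then 1 else 0)" if "E \<in> Pow {1..n}" for E
      using that finite_subset[of E "{1..n}"] by (simp add: edge_weight_empty_left v_def)
    then have "(\<Sum>E\<in>Pow {1..n}. edge_weight y {} E * v E) = (\<Sum>E\<in>Pow {1..n}. if E = {} then 1 else 0)"
      by (rule sum.cong[OF refl])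
    then show ?thesis using True by simp
  next
    case False
    then have "D \<in> columns n" using that by (simp add: columns_def)
    have "(\<Sum>E\<in>columns n. edge_weight y D E * v E) = (\<Sum>E\<in>columns n. edge_weight y D E * t E * K E)"
      using empty_notin_columns by (intro sum.cong refl) (auto simp: v_def)
    then show ?thesis
      unfolding Pow_eq_insert_columns using False K_rec[OF \<open>D \<in> columns n\<close>]
      by (simp add: finite_columns empty_notin_columns v_def edge_weight_empty_right)
  qed
  show ?thesis
    unfolding chain_rec_iff_edge_weight
  proof
    fix C assume C: "C \<in> columns n"
    let ?A = "edge_weight (inverse y) C"
    define \<Sigma> where "\<Sigma> = (\<Sum>D\<in>columns n. ?A D * ?S D * ((1 + t D) * K D))"
    have "?S C * (t C * K C) = (\<Sum>D\<in>Pow {1..n}. ?A D * ?S D * (\<Sum>E\<in>Pow {1..n}. edge_weight y D E * v E))"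
      using edge_weight_inversion_sum[OF y, of C n v] C by (simp add: v_def columns_def)
    also have "\<dots> = (\<Sum>D\<in>Pow {1..n}. ?A D * ?S D * (if D = {} then 1 else (1 + t D) * K D))"
      by (intro sum.cong refl) (simp only: edge_weight_v)
    also have "\<dots> = ?c + (\<Sum>D\<in>columns n. ?A D * ?S D * (if D = {} then 1 else (1 + t D) * K D))"
      unfolding Pow_eq_insert_columns
      by (simp add: finite_columns empty_notin_columns edge_weight_empty_right sign_weight_empty)
    also have "(\<Sum>D\<in>columns n. ?A D * ?S D * (if D = {} then 1 else (1 + t D) * K D)) = \<Sigma>"
      unfolding \<Sigma>_def using empty_notin_columns by (intro sum.cong refl) auto
    finally have inv: "?S C * (t C * K C) = ?c + \<Sigma>" .
    have "(\<Sum>D\<in>columns n. ?A D * t' D * (- ?S D * K D / ?c)) = \<Sigma> / ?c"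
      unfolding \<Sigma>_def sum_divide_distrib by (intro sum.cong refl) (simp add: t' y field_simps)
    also have "\<dots> = ?S C * (t C * K C) / ?c - 1"
      using inv y by (simp add: field_simps)
    also have "\<dots> = (1 + t' C) * (- ?S C * K C / ?c) - 1"
      using y by (simp add: t'[OF C] field_simps)
    finally show "(1 + t' C) * (- ?S C * K C / ?c) =
        1 + (\<Sum>D\<in>columns n. ?A D * t' D * (- ?S D * K D / ?c))"
      by simp
  qed
qed

lemma HLS_eq_chain_sum_atLeastAtMost:
  fixes x :: "nat set \<Rightarrow> 'a::field"
  assumes "n \<ge> 1"
  defines "t \<equiv> \<lambda>C. x C / (1 - x C)"
  shows "HLS n y x = (1 + t {1..n}) * chain_sum n y t {1..n}"
proof -
  have top: "{1..n} \<in> columns n" using assms(1) by (auto simp: columns_def)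
  have "(1 + t {1..n}) * chain_sum n y t {1..n} =
      1 + (\<Sum>D\<in>columns n. edge_weight y {1..n} D * t D * chain_sum n y t D)"
    using chain_rec_chain_sum[of n y t] top by (simp add: chain_rec_iff_edge_weight)
  also have "\<dots> = 1 + (\<Sum>D\<in>columns n. t D * chain_sum n y t D)"
    using edge_weight_atLeastAtMost_left[of _ n y]
    by (intro arg_cong[where f = "(+) 1"] sum.cong refl) (simp add: columns_def)
  also have "\<dots> = HLS n y x" by (simp add: HLS_eq_chain_sum t_def)
  finally show ?thesis by simp
qed

theorem theoremA:
  fixes n :: nat and y :: "'a::field_char_0" and x :: "nat set \<Rightarrow> 'a"
  assumes "n \<ge> 1"
    and "y \<noteq> 0"
    and "\<And>C. C \<noteq> {} \<Longrightarrow> C \<subseteq> {1..n} \<Longrightarrow> x C \<noteq> 0 \<and> x C \<noteq> 1"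
  shows "HLS n (inverse y) (\<lambda>C. inverse (x C)) =
         (-1) ^ n * inverse y ^ (n choose 2) * x {1..n} * HLS n y x"
proof -
  define t where "t = (\<lambda>C. x C / (1 - x C))"
  define t' where "t' = (\<lambda>C. inverse (x C) / (1 - inverse (x C)))"
  let ?top = "{1..n}" and ?c = "y ^ (n choose 2)"
  have top: "?top \<in> columns n" using assms(1) by (auto simp: columns_def)
  have x: "x ?top \<noteq> 0" "x ?top \<noteq> 1" using assms(3)[of ?top] top by (auto simp: columns_def)
  have t'_eq: "t' C = -1 - t C" if "C \<in> columns n" for C
    using assms(3)[of C] that by (auto simp: columns_def t_def t'_def field_simps)
  have "chain_sum n (inverse y) t' ?top = - ((-1) ^ n * chain_sum n y t ?top) / ?c"
    using chain_rec_unique[OF chain_rec_chain_sum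
        chain_rec_reciprocity[where t = t and t' = t', OF assms(2) chain_rec_chain_sum t'_eq] top]
    unfolding sign_weight_atLeastAtMost by simp
  moreover have "HLS n (inverse y) (\<lambda>C. inverse (x C)) = (1 + t' ?top) * chain_sum n (inverse y) t' ?top"
    unfolding t'_def by (rule HLS_eq_chain_sum_atLeastAtMost[OF assms(1)])
  ultimately have "HLS n (inverse y) (\<lambda>C. inverse (x C)) = t ?top * ((-1) ^ n * chain_sum n y t ?top) / ?c"
    using t'_eq[OF top] by simp
  also have "\<dots> = (-1) ^ n * inverse y ^ (n choose 2) * x ?top * ((1 + t ?top) * chain_sum n y t ?top)"
    using x assms(2) by (simp add: t_def field_simps power_inverse)
  also have "(1 + t ?top) * chain_sum n y t ?top = HLS n y x"
    unfolding t_def by (rule HLS_eq_chain_sum_atLeastAtMost[OF assms(1), symmetric])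
  finally show ?thesis .
qed

end
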